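(* Let $X$ and $Y$ be topological vector spaces (over $\mathbb{R}$), let $\theta$ be the origin of $Y$, let $D$ be a nonempty convex subset of $X$, and let $K$ be a nonempty set. Let $F: D\times K \rightrightarrows Y$ and $G: D\times D\rightrightarrows Y$ be set-valued mappings satisfying: (i) for each $y\in K$, the set $\{x\in D: \theta\in F(x,y)\}$ is compactly closed; (ii) $G$ is a KKM-type mapping on $D$; (iii) for each $y\in K$ there exists $z\in D$ such that for all $x\in D$, $\theta\in G(z,x)$ implies $\theta\in F(x,y)$; (iv) there exist a nonempty compact subset $M$ of $D$ and a finite subset $L$ of $K$ such that for each $x\in D\setminus M$ there exists $y\in L$ with $\theta\notin F(x,y)$. Then there exists $\bar x\in M$ such that $\theta\in F(\bar x,y)$ for all $y\in K$.
   Context: A subset $A$ of a topological space $X$ is compactly closed if for every compact subset $M$ of $X$ the set $A\cap M$ is closed in $M$. A set-valued mapping $G: D\times D\rightrightarrows Y$ is called a KKM-type mapping on $D$ if for every finite subset $\{x_1,\dots,x_n\}\subset D$ and every $x\in \operatorname{co}\{x_1,\dots,x_n\}\cap D$ there exists $j\in\{1,\dots,n\}$ such that $\theta\in G(x_j,x)$. Here $\operatorname{co}$ denotes the convex hull. *)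

theory Defs
  imports "HOL-Analysis.Analysis"
begin

definition tvs :: "'a::{real_vector, topological_space} itself \<Rightarrow> bool" where
  "tvs _ \<longleftrightarrow>
     continuous_on (UNIV :: ('a \<times> 'a) set) (\<lambda>(u, v). u + v) \<and>
     continuous_on (UNIV :: (real \<times> 'a) set) (\<lambda>(c, v). c *\<^sub>R v)"

definition compactly_closed :: "'a::topological_space set \<Rightarrow> bool" where
  "compactly_closed A \<longleftrightarrow> (\<forall>M. compact M \<longrightarrow> closedin (top_of_set M) (A \<inter> M))"

definition KKM_type :: "'a::real_vector set \<Rightarrow> ('a \<Rightarrow> 'a \<Rightarrow> 'b::zero set) \<Rightarrow> bool" where
  "KKM_type D G \<longleftrightarrow>
     (\<forall>A. finite A \<and> A \<subseteq> D \<longrightarrow> (\<forall>x \<in> convex hull A \<inter> D. \<exists>a\<in>A. 0 \<in> G a x))"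

end

theory Submission
  imports Defs "HOL-Homology.Brouwer_Degree"
begin

(* Brouwer's fixed point theorem holds for the standard simplex of every dimension: for a fixed
   point free self-map f of the unit ball, x \<mapsto> (x - f x) / |x - f x| restricted to the sphere
   would be homotopic both to the identity and to a constant, but spheres are not contractible. Brouwer's theorem gives
   the KKM lemma for the standard simplex. Mapping the simplex affinely onto the convex hull of the
   points z y of (iii), the KKM property of G shows that finitely many of the sets
   {x \<in> D. 0 \<in> F x y} always have a common point; by (iv) it lies in M once the family contains L,
   and the compactness of M yields a common point of all of them. *)

definition nball :: "nat \<Rightarrow> (nat \<Rightarrow> real) set" where
  "nball m = {x. (\<forall>i>m. x i = 0) \<and> (\<Sum>i\<le>m. (x i)\<^sup>2) \<le> 1}"

definition nsphere_set :: "nat \<Rightarrow> (nat \<Rightarrow> real) set" where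
  "nsphere_set m = {x. (\<Sum>i\<le>m. (x i)\<^sup>2) = 1 \<and> (\<forall>i>m. x i = 0)}"

definition sphere_proj :: "nat \<Rightarrow> (nat \<Rightarrow> real) \<Rightarrow> nat \<Rightarrow> real" where
  "sphere_proj m v = (\<lambda>i. v i / sqrt (\<Sum>j\<le>m. (v j)\<^sup>2))"

lemma nsphere_eq_top_of_set: "nsphere m = top_of_set (nsphere_set m)"
  by (simp add: nsphere nsphere_set_def euclidean_product_topology)

lemma nsphere_set_subset_nball: "nsphere_set m \<subseteq> nball m"
  by (auto simp: nsphere_set_def nball_def)

lemma eq_if_sum_power2_diff_eq_0:
  fixes x y :: "nat \<Rightarrow> real"
  assumes "\<forall>i>m. x i = y i" and "(\<Sum>j\<le>m. (x j - y j)\<^sup>2) = 0"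
  shows "x = y"
proof
  fix i
  show "x i = y i"
  proof (cases "i \<le> m")
    case True
    then show ?thesis
      using assms(2) by (subst (asm) sum_nonneg_eq_0_iff) auto
  qed (use assms(1) in auto)
qed

lemma sphere_proj_in_nsphere_set:
  assumes "\<forall>i>m. v i = 0" and "(\<Sum>j\<le>m. (v j)\<^sup>2) \<noteq> 0"
  shows "sphere_proj m v \<in> nsphere_set m"
proof -
  define s where "s = (\<Sum>j\<le>m. (v j)\<^sup>2)"
  have "s > 0"
    using assms(2) unfolding s_def by (metis less_eq_real_def sum_nonneg zero_le_power2)
  then have "(\<Sum>i\<le>m. (v i / sqrt s)\<^sup>2) = 1"
    by (simp add: power_divide flip: sum_divide_distrib s_def)
  then show ?thesis
    using assms(1) by (simp add: sphere_proj_def nsphere_set_def s_def)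
qed

lemma sphere_proj_id: "x \<in> nsphere_set m \<Longrightarrow> sphere_proj m x = x"
  by (simp add: sphere_proj_def nsphere_set_def)

lemma continuous_on_sphere_proj:
  assumes "continuous_on A V" and "\<And>p. p \<in> A \<Longrightarrow> (\<Sum>j\<le>m. (V p j)\<^sup>2) \<noteq> 0"
  shows "continuous_on A (\<lambda>p. sphere_proj m (V p))"
proof (rule continuous_on_coordinatewise_then_product)
  fix i
  have "\<And>j. continuous_on A (\<lambda>p. V p j)"
    by (rule continuous_on_product_then_coordinatewise[OF assms(1)])
  then show "continuous_on A (\<lambda>p. sphere_proj m (V p) i)"
    unfolding sphere_proj_def using assms(2) by (intro continuous_intros) auto
qed

lemma homotopic_sphere_proj:
  fixes V :: "real \<times> (nat \<Rightarrow> real) \<Rightarrow> nat \<Rightarrow> real"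
  assumes contV: "continuous_on ({0..1} \<times> nsphere_set m) V"
    and V: "\<And>p. p \<in> {0..1} \<times> nsphere_set m \<Longrightarrow> (\<forall>i>m. V p i = 0) \<and> (\<Sum>j\<le>m. (V p j)\<^sup>2) \<noteq> 0"
    and V0: "\<And>x. x \<in> nsphere_set m \<Longrightarrow> sphere_proj m (V (0, x)) = g x"
    and V1: "\<And>x. x \<in> nsphere_set m \<Longrightarrow> sphere_proj m (V (1, x)) = h x"
  shows "homotopic_with (\<lambda>_. True) (nsphere m) (nsphere m) g h"
proof (subst homotopic_with, simp, intro exI conjI ballI)
  show "continuous_map (prod_topology (top_of_set {0..1}) (nsphere m)) (nsphere m)
          (\<lambda>p. sphere_proj m (V p))"
    unfolding nsphere_eq_top_of_set prod_topology_subtopology_eu continuous_map_subtopology_eu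
    using V sphere_proj_in_nsphere_set by (auto intro!: continuous_on_sphere_proj contV)
qed (use V0 V1 in \<open>auto simp: nsphere_eq_top_of_set\<close>)

lemma continuous_on_compose_coordinate:
  assumes "continuous_on T f" and "continuous_on A g" and "g ` A \<subseteq> T"
  shows "continuous_on A (\<lambda>p. f (g p) i)"
  by (rule continuous_on_product_then_coordinatewise[OF continuous_on_compose2[OF assms]])

lemma scale_in_nball:
  assumes "\<bar>t\<bar> \<le> 1" and "x \<in> nball m"
  shows "(\<lambda>j. t * x j) \<in> nball m"
proof -
  have "(\<Sum>j\<le>m. (t * x j)\<^sup>2) = t\<^sup>2 * (\<Sum>j\<le>m. (x j)\<^sup>2)"
    by (simp add: power_mult_distrib sum_distrib_left)
  also have "\<dots> \<le> 1 * 1"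
    using assms by (intro mult_mono) (auto simp: nball_def abs_square_le_1 sum_nonneg)
  finally show ?thesis
    using assms by (auto simp: nball_def)
qed

lemma homotopic_id_sphere_proj_diff:
  assumes contf: "continuous_on (nball m) f" and f_nball: "f ` nball m \<subseteq> nball m"
    and no_fix: "\<And>x. x \<in> nsphere_set m \<Longrightarrow> f x \<noteq> x"
  shows "homotopic_with (\<lambda>_. True) (nsphere m) (nsphere m) id (\<lambda>x. sphere_proj m (\<lambda>i. x i - f x i))"
proof -
  define V where "V = (\<lambda>p i. snd p i - fst p * f (snd p) i)"
  show ?thesis
  proof (rule homotopic_sphere_proj[of m V])
    show "continuous_on ({0..1} \<times> nsphere_set m) V"
      unfolding V_def using nsphere_set_subset_nball
      by (fastforce intro!: continuous_intros continuous_on_compose_coordinate[OF contf]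
          continuous_on_product_then_coordinatewise[OF continuous_on_snd[OF continuous_on_id]])
    fix p :: "real \<times> (nat \<Rightarrow> real)"
    assume "p \<in> {0..1} \<times> nsphere_set m"
    then obtain t x where tx: "p = (t, x)" "t \<in> {0..1}" "x \<in> nsphere_set m"
      by auto
    then have fx: "f x \<in> nball m"
      using f_nball nsphere_set_subset_nball by blast
    have "(\<Sum>j\<le>m. (V p j)\<^sup>2) \<noteq> 0"
    proof
      assume "(\<Sum>j\<le>m. (V p j)\<^sup>2) = 0"
      then have x_eq: "x = (\<lambda>j. t * f x j)"
        using tx fx by (intro eq_if_sum_power2_diff_eq_0[of m]) (auto simp: V_def nsphere_set_def nball_def)
      have "1 = (\<Sum>j\<le>m. (t * f x j)\<^sup>2)"
        using tx(3) by (subst (asm) x_eq) (simp add: nsphere_set_def)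
      also have "\<dots> = t\<^sup>2 * (\<Sum>j\<le>m. (f x j)\<^sup>2)"
        by (simp add: power_mult_distrib sum_distrib_left)
      also have "\<dots> \<le> t\<^sup>2"
        using fx by (intro mult_left_le) (auto simp: nball_def)
      finally have "t = 1"
        using tx(2) mult_left_le_one_le[of t t] by (auto simp: power2_eq_square)
      then show False
        using x_eq no_fix[OF tx(3)] by auto
    qed
    then show "(\<forall>i>m. V p i = 0) \<and> (\<Sum>j\<le>m. (V p j)\<^sup>2) \<noteq> 0"
      using tx fx by (simp add: V_def nsphere_set_def nball_def)
  qed (auto simp: V_def sphere_proj_id)
qed

lemma homotopic_sphere_proj_diff_const:
  assumes contf: "continuous_on (nball m) f" and f_nball: "f ` nball m \<subseteq> nball m"
    and no_fix: "\<And>x. x \<in> nball m \<Longrightarrow> f x \<noteq> x"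
  shows "homotopic_with (\<lambda>_. True) (nsphere m) (nsphere m)
           (\<lambda>x. sphere_proj m (\<lambda>i. x i - f x i)) (\<lambda>x. sphere_proj m (\<lambda>i. - f (\<lambda>j. 0) i))"
proof -
  define y where "y p = (\<lambda>j. (1 - fst p) * snd p j)" for p :: "real \<times> (nat \<Rightarrow> real)"
  define V where "V p = (\<lambda>i. y p i - f (y p) i)" for p
  have y: "y p \<in> nball m" if "p \<in> {0..1::real} \<times> nsphere_set m" for p
    using that nsphere_set_subset_nball unfolding y_def by (intro scale_in_nball) (auto simp: subset_iff)
  show ?thesis
  proof (rule homotopic_sphere_proj[of m V])
    have cont_y: "continuous_on ({0..1} \<times> nsphere_set m) y"
      unfolding y_def
      by (intro continuous_intros continuous_on_product_then_coordinatewise[OF continuous_on_snd[OF continuous_on_id]])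
    have "y ` ({0..1} \<times> nsphere_set m) \<subseteq> nball m"
      using y by blast
    then show "continuous_on ({0..1} \<times> nsphere_set m) V"
      unfolding V_def
      by (intro continuous_on_coordinatewise_then_product continuous_intros
          continuous_on_product_then_coordinatewise[OF cont_y] continuous_on_compose_coordinate[OF contf cont_y])
    fix p :: "real \<times> (nat \<Rightarrow> real)"
    assume p: "p \<in> {0..1} \<times> nsphere_set m"
    then have "f (y p) \<in> nball m"
      using y f_nball by blast
    then show "(\<forall>i>m. V p i = 0) \<and> (\<Sum>j\<le>m. (V p j)\<^sup>2) \<noteq> 0"
      using y[OF p] no_fix[OF y[OF p]] eq_if_sum_power2_diff_eq_0[of m "y p" "f (y p)"]
      by (auto simp: V_def nball_def)
  qed (auto simp: V_def y_def)
qed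

lemma brouwer_nball:
  assumes contf: "continuous_on (nball m) f" and f_nball: "f ` nball m \<subseteq> nball m"
  shows "\<exists>x\<in>nball m. f x = x"
proof (rule ccontr)
  assume "\<not> ?thesis"
  then have no_fix: "\<And>x. x \<in> nball m \<Longrightarrow> f x \<noteq> x"
    by blast
  have "homotopic_with (\<lambda>_. True) (nsphere m) (nsphere m) id (\<lambda>x. sphere_proj m (\<lambda>i. - f (\<lambda>j. 0) i))"
    using homotopic_id_sphere_proj_diff[OF contf f_nball] homotopic_sphere_proj_diff_const[OF contf f_nball]
      no_fix nsphere_set_subset_nball
    by (meson homotopic_with_trans subsetD)
  then have "contractible_space (nsphere m)"
    unfolding contractible_space_def by blast
  then show False
    using non_contractible_space_nsphere by blast
qed

lemma compact_standard_simplex: "compact (standard_simplex m)"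
  using compactin_standard_simplex by (simp add: euclidean_product_topology)

lemma standard_simplex_subset_nball: "standard_simplex m \<subseteq> nball m"
proof
  fix x assume x: "x \<in> standard_simplex m"
  have "(\<Sum>i\<le>m. (x i)\<^sup>2) \<le> (\<Sum>i\<le>m. x i)"
    using x by (intro sum_mono) (auto simp: standard_simplex_def power2_eq_square mult_left_le_one_le)
  then show "x \<in> nball m"
    using x by (simp add: standard_simplex_def nball_def)
qed

text \<open>Clip the negative coordinates, spread the missing mass evenly, and rescale.\<close>

lemma standard_simplex_retraction:
  obtains r where "continuous_on UNIV r" and "\<And>x. r x \<in> standard_simplex m"
    and "\<And>x. x \<in> standard_simplex m \<Longrightarrow> r x = x"
proof
  define s where "s x = (\<Sum>j\<le>m. max (x j) 0)" for x :: "nat \<Rightarrow> real"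
  define c where "c x = max 0 (1 - s x)" for x
  define r where "r x i = (if i \<le> m then (max (x i) 0 + c x / (m + 1)) / max 1 (s x) else 0)" for x i
  have mass: "(\<Sum>i\<le>m. max (x i) 0 + c x / (m + 1)) = max 1 (s x)" for x
    by (simp add: sum.distrib s_def c_def)
  show "continuous_on UNIV r"
  proof (rule continuous_on_coordinatewise_then_product)
    fix i
    show "continuous_on UNIV (\<lambda>x. r x i)"
    proof (cases "i \<le> m")
      case True
      then show ?thesis
        unfolding r_def c_def s_def by (simp, intro continuous_intros) (auto simp: max_def)
    qed (simp add: r_def)
  qed
  show "r x \<in> standard_simplex m" for x
  proof -
    have nonneg: "0 \<le> r x i" for i
      by (simp add: r_def c_def)
    have sum1: "(\<Sum>i\<le>m. r x i) = 1"
      using mass[of x] by (simp add: r_def flip: sum_divide_distrib)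
    have "r x i \<le> 1" for i
    proof (cases "i \<le> m")
      case True
      then show ?thesis
        using sum1 nonneg by (metis atMost_iff finite_atMost member_le_sum)
    qed (simp add: r_def)
    then show ?thesis
      using nonneg sum1 by (simp add: standard_simplex_def r_def)
  qed
  show "r x = x" if x: "x \<in> standard_simplex m" for x
  proof
    fix i
    have "s x = 1"
      using x by (simp add: s_def standard_simplex_def max_absorb1)
    then show "r x i = x i"
      using x by (simp add: r_def c_def standard_simplex_def max_absorb1)
  qed
qed

theorem brouwer_standard_simplex:
  assumes contf: "continuous_on (standard_simplex m) f"
    and f_simplex: "f ` standard_simplex m \<subseteq> standard_simplex m"
  shows "\<exists>x\<in>standard_simplex m. f x = x"
proof -
  obtain r where contr: "continuous_on UNIV r" and r: "\<And>x. r x \<in> standard_simplex m"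
    and r_id: "\<And>x. x \<in> standard_simplex m \<Longrightarrow> r x = x"
    using standard_simplex_retraction by blast
  have "continuous_on (nball m) (f \<circ> r)"
    using r by (intro continuous_on_compose continuous_on_subset[OF contr] continuous_on_subset[OF contf]) auto
  moreover have "(f \<circ> r) ` nball m \<subseteq> nball m"
    using f_simplex r standard_simplex_subset_nball by fastforce
  ultimately obtain x where x: "f (r x) = x"
    using brouwer_nball[of m "f \<circ> r"] by auto
  have "f (r x) \<in> standard_simplex m"
    using f_simplex r by blast
  then have "x \<in> standard_simplex m"
    using x by simp
  then show ?thesis
    using x r_id by metis
qed

lemma normalized_weights_standard_simplex:
  fixes w :: "nat \<Rightarrow> 'a::topological_space \<Rightarrow> real"
  assumes cont: "\<And>k. k \<le> m \<Longrightarrow> continuous_on A (w k)"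
    and nonneg: "\<And>k x. k \<le> m \<Longrightarrow> x \<in> A \<Longrightarrow> 0 \<le> w k x"
    and pos: "\<And>x. x \<in> A \<Longrightarrow> 0 < (\<Sum>k\<le>m. w k x)"
  defines "g \<equiv> \<lambda>x k. if k \<le> m then w k x / (\<Sum>j\<le>m. w j x) else 0"
  shows "continuous_on A g" and "g ` A \<subseteq> standard_simplex m"
proof -
  show "continuous_on A g"
  proof (rule continuous_on_coordinatewise_then_product)
    fix k
    show "continuous_on A (\<lambda>x. g x k)"
    proof (cases "k \<le> m")
      case True
      then show ?thesis
        using pos unfolding g_def by (simp, intro continuous_intros cont) (auto dest: pos)
    qed (simp add: g_def)
  qed
  show "g ` A \<subseteq> standard_simplex m"
  proof clarify
    fix x assume x: "x \<in> A"
    have "w k x \<le> (\<Sum>j\<le>m. w j x)" if "k \<le> m" for k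
      using that x nonneg by (intro member_le_sum) auto
    moreover have "(\<Sum>k\<le>m. g x k) = 1"
      using pos[OF x] by (simp add: g_def flip: sum_divide_distrib)
    ultimately show "g x \<in> standard_simplex m"
      using pos[OF x] nonneg[OF _ x] by (auto simp: standard_simplex_def g_def)
  qed
qed

text \<open>Normalized distances to the sets \<open>E k\<close> define a self-map of the simplex; at a fixed point
  \<open>x\<close> every positive coordinate \<open>x k\<close> forces \<open>x \<notin> E k\<close>, contradicting the covering condition.\<close>

theorem KKM_standard_simplex:
  assumes E_closed: "\<And>k. k \<le> m \<Longrightarrow> closedin (top_of_set (standard_simplex m)) (E k)"
    and cover: "\<And>x. x \<in> standard_simplex m \<Longrightarrow> \<exists>k\<le>m. 0 < x k \<and> x \<in> E k"
  shows "\<exists>x\<in>standard_simplex m. \<forall>k\<le>m. x \<in> E k"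
proof (rule ccontr)
  assume "\<not> ?thesis"
  then have miss: "\<And>x. x \<in> standard_simplex m \<Longrightarrow> \<exists>k\<le>m. x \<notin> E k"
    by blast
  have closed_E: "closed (E k)" if "k \<le> m" for k
    using closedin_closed_trans[OF E_closed[OF that]] compact_standard_simplex compact_imp_closed
    by blast
  have nonempty_E: "E k \<noteq> {}" if "k \<le> m" for k
  proof -
    let ?e = "\<lambda>j. if j = k then 1 else 0 :: real"
    have "?e \<in> standard_simplex m"
      using that by simp
    then obtain j where "0 < ?e j" "?e \<in> E j"
      using cover by blast
    then show ?thesis
      by (auto split: if_splits)
  qed
  have total_pos: "0 < (\<Sum>k\<le>m. infdist x (E k))" if x: "x \<in> standard_simplex m" for x
  proof -
    obtain k where k: "k \<le> m" "x \<notin> E k"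
      using miss[OF x] by blast
    then have "0 < infdist x (E k)"
      using closed_E nonempty_E by (intro infdist_pos_not_in_closed) auto
    also have "\<dots> \<le> (\<Sum>k\<le>m. infdist x (E k))"
      using k(1) by (intro member_le_sum) (auto simp: infdist_nonneg)
    finally show ?thesis .
  qed
  define g where "g x = (\<lambda>k. if k \<le> m then infdist x (E k) / (\<Sum>j\<le>m. infdist x (E j)) else 0)" for x
  have "continuous_on (standard_simplex m) g" and "g ` standard_simplex m \<subseteq> standard_simplex m"
    unfolding g_def
    by (intro normalized_weights_standard_simplex continuous_intros infdist_nonneg total_pos; simp)+
  then obtain x where x: "x \<in> standard_simplex m" "g x = x"
    using brouwer_standard_simplex by blast
  obtain k where k: "k \<le> m" "0 < x k" "x \<in> E k"
    using cover[OF x(1)] by blast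
  then have "x k = 0"
    using x(2) by (metis g_def div_0 infdist_zero)
  with k show False
    by simp
qed

lemma continuous_on_add_tvs:
  fixes f g :: "'a::topological_space \<Rightarrow> 'b::{real_vector, topological_space}"
  assumes "tvs TYPE('b)" and "continuous_on S f" and "continuous_on S g"
  shows "continuous_on S (\<lambda>x. f x + g x)"
proof -
  have "continuous_on UNIV (\<lambda>(u::'b, v). u + v)"
    using assms(1) by (simp add: tvs_def)
  from continuous_on_compose2[OF this continuous_on_Pair[OF assms(2,3)]] show ?thesis
    by simp
qed

lemma continuous_on_scaleR_tvs:
  fixes c :: "'a::topological_space \<Rightarrow> real" and g :: "'a \<Rightarrow> 'b::{real_vector, topological_space}"
  assumes "tvs TYPE('b)" and "continuous_on S c" and "continuous_on S g"
  shows "continuous_on S (\<lambda>x. c x *\<^sub>R g x)"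
proof -
  have "continuous_on UNIV (\<lambda>(a::real, v::'b). a *\<^sub>R v)"
    using assms(1) by (simp add: tvs_def)
  from continuous_on_compose2[OF this continuous_on_Pair[OF assms(2,3)]] show ?thesis
    by simp
qed

lemma continuous_on_sum_tvs:
  fixes f :: "'i \<Rightarrow> 'a::topological_space \<Rightarrow> 'b::{real_vector, topological_space}"
  assumes "tvs TYPE('b)" and "finite I" and "\<And>i. i \<in> I \<Longrightarrow> continuous_on S (f i)"
  shows "continuous_on S (\<lambda>x. \<Sum>i\<in>I. f i x)"
  using assms(2,3)
proof (induction I rule: finite_induct)
  case (insert i I)
  then show ?case
    by (simp add: continuous_on_add_tvs[OF assms(1)])
qed simp

lemma sum_scaleR_in_convex_hull_support:
  assumes x: "x \<in> standard_simplex m"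
  shows "(\<Sum>k\<le>m. x k *\<^sub>R q k) \<in> convex hull (q ` {k. k \<le> m \<and> 0 < x k})"
proof -
  let ?J = "{k. k \<le> m \<and> 0 < x k}"
  have zero_outside: "x k = 0" if "k \<in> {..m} - ?J" for k
    using x that by (auto simp: standard_simplex_def order.order_iff_strict)
  have "(\<Sum>k\<le>m. x k *\<^sub>R q k) = (\<Sum>k\<in>?J. x k *\<^sub>R q k)"
    using zero_outside by (intro sum.mono_neutral_right) auto
  moreover have "(\<Sum>k\<le>m. x k) = (\<Sum>k\<in>?J. x k)"
    using zero_outside by (intro sum.mono_neutral_right) auto
  then have "(\<Sum>k\<in>?J. x k) = 1"
    using x by (simp add: standard_simplex_def)
  then have "(\<Sum>k\<in>?J. x k *\<^sub>R q k) \<in> convex hull (q ` ?J)"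
    by (intro convex_sum convex_convex_hull) (auto intro: hull_inc)
  ultimately show ?thesis
    by simp
qed

lemma closedin_preimage_compactly_closed:
  assumes "compact T" and "continuous_on T \<phi>" and "compactly_closed S"
  shows "closedin (top_of_set T) {x \<in> T. \<phi> x \<in> S}"
proof -
  have "compact (\<phi> ` T)"
    by (rule compact_continuous_image[OF assms(2,1)])
  then have "closedin (top_of_set (\<phi> ` T)) (\<phi> ` T \<inter> S)"
    using assms(3) unfolding compactly_closed_def by (metis inf_commute)
  then have "closedin (top_of_set T) (T \<inter> \<phi> -` (\<phi> ` T \<inter> S))"
    by (rule continuous_closedin_preimage_gen[OF assms(2), rotated]) auto
  moreover have "T \<inter> \<phi> -` (\<phi> ` T \<inter> S) = {x \<in> T. \<phi> x \<in> S}"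
    by auto
  ultimately show ?thesis
    by simp
qed

lemma KKM_type_intersection_atMost:
  fixes D :: "'x::{real_vector, topological_space} set" and G :: "'x \<Rightarrow> 'x \<Rightarrow> 'y::zero set"
    and p :: "nat \<Rightarrow> 'x" and S :: "nat \<Rightarrow> 'x set"
  assumes X_tvs: "tvs TYPE('x)" and D_convex: "convex D" and KKM: "KKM_type D G"
    and p_D: "\<And>k. k \<le> m \<Longrightarrow> p k \<in> D"
    and S_closed: "\<And>k. k \<le> m \<Longrightarrow> compactly_closed (S k)"
    and G_S: "\<And>k x. k \<le> m \<Longrightarrow> x \<in> D \<Longrightarrow> 0 \<in> G (p k) x \<Longrightarrow> x \<in> S k"
  shows "\<exists>x\<in>D. \<forall>k\<le>m. x \<in> S k"
proof -
  define \<phi> where "\<phi> x = (\<Sum>k\<le>m. x k *\<^sub>R p k)" for x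
  have \<phi>_hull: "\<phi> x \<in> convex hull (p ` {k. k \<le> m \<and> 0 < x k}) \<inter> D"
    if "x \<in> standard_simplex m" for x
  proof -
    have "convex hull (p ` {k. k \<le> m \<and> 0 < x k}) \<subseteq> D"
      using p_D D_convex by (intro hull_minimal) auto
    then show ?thesis
      using sum_scaleR_in_convex_hull_support[OF that, of p] by (auto simp: \<phi>_def)
  qed
  have cont_\<phi>: "continuous_on (standard_simplex m) \<phi>"
    unfolding \<phi>_def
    by (intro continuous_on_sum_tvs[OF X_tvs] continuous_on_scaleR_tvs[OF X_tvs]
        continuous_on_subset[OF continuous_on_product_coordinates] continuous_on_const) auto
  define E where "E k = {x \<in> standard_simplex m. \<phi> x \<in> S k}" for k
  have "\<exists>x\<in>standard_simplex m. \<forall>k\<le>m. x \<in> E k"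
  proof (rule KKM_standard_simplex)
    show "closedin (top_of_set (standard_simplex m)) (E k)" if "k \<le> m" for k
      unfolding E_def
      by (rule closedin_preimage_compactly_closed[OF compact_standard_simplex cont_\<phi> S_closed[OF that]])
  next
    fix x assume x: "x \<in> standard_simplex m"
    let ?A = "p ` {k. k \<le> m \<and> 0 < x k}"
    have "finite ?A \<and> ?A \<subseteq> D"
      using p_D by auto
    then obtain a where a: "a \<in> ?A" "0 \<in> G a (\<phi> x)"
      using KKM[unfolded KKM_type_def, rule_format, OF _ \<phi>_hull[OF x]] by blast
    then obtain k where "k \<le> m" "0 < x k" "a = p k"
      by auto
    then show "\<exists>k\<le>m. 0 < x k \<and> x \<in> E k"
      using G_S[of k "\<phi> x"] a \<phi>_hull[OF x] x by (auto simp: E_def)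
  qed
  then show ?thesis
    using \<phi>_hull by (auto simp: E_def)
qed

lemma KKM_type_finite_intersection:
  fixes D :: "'x::{real_vector, topological_space} set" and G :: "'x \<Rightarrow> 'x \<Rightarrow> 'y::zero set"
    and p :: "'i \<Rightarrow> 'x" and S :: "'i \<Rightarrow> 'x set"
  assumes X_tvs: "tvs TYPE('x)" and D_convex: "convex D" and D_ne: "D \<noteq> {}"
    and KKM: "KKM_type D G" and I: "finite I" and p_D: "\<And>i. i \<in> I \<Longrightarrow> p i \<in> D"
    and S_closed: "\<And>i. i \<in> I \<Longrightarrow> compactly_closed (S i)"
    and G_S: "\<And>i x. i \<in> I \<Longrightarrow> x \<in> D \<Longrightarrow> 0 \<in> G (p i) x \<Longrightarrow> x \<in> S i"
  shows "\<exists>x\<in>D. \<forall>i\<in>I. x \<in> S i"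
proof (cases "I = {}")
  case True
  then show ?thesis
    using D_ne by auto
next
  case False
  then obtain m where "card I = Suc m"
    using I by (metis card_0_eq not0_implies_Suc)
  then obtain b where b: "bij_betw b {..m} I"
    using I by (metis card_atMost finite_atMost finite_same_card_bij)
  then have b_I: "b k \<in> I" if "k \<le> m" for k
    using that by (auto simp: bij_betw_def)
  obtain x where "x \<in> D" "\<forall>k\<le>m. x \<in> S (b k)"
    using KKM_type_intersection_atMost[OF X_tvs D_convex KKM, of m "p \<circ> b" "S \<circ> b"]
      p_D S_closed G_S b_I by auto
  moreover have "I = b ` {..m}"
    using b by (simp add: bij_betw_def)
  ultimately show ?thesis
    by auto
qed

lemma compact_Inter_compactly_closed:
  assumes M: "compact M" and S_closed: "\<And>y. y \<in> K \<Longrightarrow> compactly_closed (S y)"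
    and finite_inter: "\<And>B. finite B \<Longrightarrow> B \<subseteq> K \<Longrightarrow> \<exists>x\<in>M. \<forall>y\<in>B. x \<in> S y"
  shows "\<exists>x\<in>M. \<forall>y\<in>K. x \<in> S y"
proof -
  have "\<exists>C. closed C \<and> S y \<inter> M = M \<inter> C" if "y \<in> K" for y
    using S_closed[OF that] M unfolding compactly_closed_def closedin_closed by blast
  then obtain C where C_closed: "\<And>y. y \<in> K \<Longrightarrow> closed (C y)"
    and C_eq: "\<And>y. y \<in> K \<Longrightarrow> S y \<inter> M = M \<inter> C y"
    by metis
  have "M \<inter> (\<Inter>y\<in>K. C y) \<noteq> {}"
  proof (rule compact_imp_fip_image[OF M C_closed])
    fix B assume B: "finite B" "B \<subseteq> K"
    then obtain x where x: "x \<in> M" "\<forall>y\<in>B. x \<in> S y"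
      using finite_inter by blast
    have "x \<in> C y" if "y \<in> B" for y
      using C_eq[of y] x that B(2) by (metis Int_iff subsetD)
    then show "M \<inter> (\<Inter>y\<in>B. C y) \<noteq> {}"
      using x(1) by blast
  qed
  then obtain x where x: "x \<in> M" "\<And>y. y \<in> K \<Longrightarrow> x \<in> C y"
    by blast
  have "x \<in> S y" if "y \<in> K" for y
    using C_eq[OF that] x(1) x(2)[OF that] by (metis Int_iff)
  with x(1) show ?thesis
    by blast
qed

theorem theorem2p3:
  fixes D :: "'x::{real_vector, topological_space} set"
    and K :: "'k set"
    and F :: "'x \<Rightarrow> 'k \<Rightarrow> 'y::{real_vector, topological_space} set"
    and G :: "'x \<Rightarrow> 'x \<Rightarrow> 'y set"
    and M :: "'x set" and L :: "'k set"
  assumes X_tvs: "tvs TYPE('x)" and Y_tvs: "tvs TYPE('y)"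
    and D_ne: "D \<noteq> {}" and D_convex: "convex D" and K_ne: "K \<noteq> {}"
    and i: "\<forall>y\<in>K. compactly_closed {x \<in> D. 0 \<in> F x y}"
    and ii: "KKM_type D G"
    and iii: "\<forall>y\<in>K. \<exists>z\<in>D. \<forall>x\<in>D. 0 \<in> G z x \<longrightarrow> 0 \<in> F x y"
    and iv: "M \<noteq> {} \<and> compact M \<and> M \<subseteq> D \<and> finite L \<and> L \<subseteq> K \<and>
          (\<forall>x \<in> D - M. \<exists>y\<in>L. 0 \<notin> F x y)"
  shows "\<exists>xb\<in>M. \<forall>y\<in>K. 0 \<in> F xb y"
proof -
  define S where "S y = {x \<in> D. 0 \<in> F x y}" for y
  obtain z where z: "\<And>y. y \<in> K \<Longrightarrow> z y \<in> D \<and> (\<forall>x\<in>D. 0 \<in> G (z y) x \<longrightarrow> 0 \<in> F x y)"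
    using iii by metis
  have "\<exists>x\<in>M. \<forall>y\<in>B. x \<in> S y" if B: "finite B" "B \<subseteq> K" for B
  proof -
    have BL: "finite (B \<union> L)" "\<And>y. y \<in> B \<union> L \<Longrightarrow> y \<in> K"
      using B iv by auto
    obtain x where x: "x \<in> D" "\<forall>y\<in>B \<union> L. x \<in> S y"
      using KKM_type_finite_intersection[OF X_tvs D_convex D_ne ii BL(1), of z S] z i BL(2)
      by (auto simp: S_def)
    then have "x \<in> M"
      using iv by (auto simp: S_def)
    with x show ?thesis
      by blast
  qed
  then obtain x where "x \<in> M" "\<forall>y\<in>K. x \<in> S y"
    using compact_Inter_compactly_closed[of M K S] i iv by (auto simp: S_def)
  then show ?thesis
    by (auto simp: S_def)
qed

end
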